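(* For every alphabet size $\sigma \geq 2$ and every Parikh vector $P \in \mathbb{N}^{\sigma}$, and for every vertex $w$ of the configuration graph $G(P)$, there exists a Hamiltonian path in $G(P)$ starting at $w$.
   Context: Alphabet $\Sigma = [\sigma]$. For $P \in \mathbb{N}^\sigma$, $n := \sum_a P[a]$ and $\Sigma^{*|_P}$ is the set of words of length $n$ over $\Sigma$ in which each symbol $a$ occurs exactly $P[a]$ times. For a word $w$ and $i\neq j$ with $w[i]\neq w[j]$, the 2-swap $w\circ(i,j)$ exchanges the symbols at positions $i$ and $j$. The configuration graph $G(P)$ has vertex set $\Sigma^{*|_P}$ and an edge $\{w,u\}$ whenever $u = w\circ(i,j)$ for some 2-swap. A Hamiltonian path starting at $w$ is a path beginning at $w$ that visits every vertex exactly once. *)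

theory Defs
  imports Main
begin

text \<open>Alphabet [sigma] = {0..<sigma}; a Parikh vector P is a list of length sigma,
  P ! a is the required number of occurrences of symbol a.\<close>

definition words_of :: "nat \<Rightarrow> nat list \<Rightarrow> nat list set" where
  "words_of \<sigma> P = {w. length w = sum_list P \<and> set w \<subseteq> {0..<\<sigma>} \<and>
                        (\<forall>a<\<sigma>. count_list w a = P ! a)}"

definition swap2 :: "nat list \<Rightarrow> nat \<Rightarrow> nat \<Rightarrow> nat list" where
  "swap2 w i j = w[i := w ! j, j := w ! i]"

definition is_2swap :: "nat list \<Rightarrow> nat list \<Rightarrow> bool" where
  "is_2swap w u \<longleftrightarrow> (\<exists>i j. i < length w \<and> j < length w \<and> i \<noteq> j \<and>
                          w ! i \<noteq> w ! j \<and> u = swap2 w i j)"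

definition conf_edge :: "nat \<Rightarrow> nat list \<Rightarrow> nat list \<Rightarrow> nat list \<Rightarrow> bool" where
  "conf_edge \<sigma> P w u \<longleftrightarrow> w \<in> words_of \<sigma> P \<and> u \<in> words_of \<sigma> P \<and>
                           (is_2swap w u \<or> is_2swap u w)"

definition ham_path_from :: "nat \<Rightarrow> nat list \<Rightarrow> nat list \<Rightarrow> nat list list \<Rightarrow> bool" where
  "ham_path_from \<sigma> P w ps \<longleftrightarrow> ps \<noteq> [] \<and> hd ps = w \<and> distinct ps \<and>
       set ps = words_of \<sigma> P \<and>
       (\<forall>k. Suc k < length ps \<longrightarrow> conf_edge \<sigma> P (ps ! k) (ps ! Suc k))"

end

theory Submission
  imports Defs "HOL-Library.Multiset"
begin

text \<open>The words of G(P) ending in a letter c form a copy of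
  G(P - e_c), embedded by appending c, so by induction each such block has a Hamiltonian path
  from any of its vertices. Order the letters occurring in P starting with the last letter of
  w and traverse the blocks in this order. If a block for c ends at x c and the next letter is
  d \<noteq> c, then d occurs in x, and exchanging that d with the final c is a single 2-swap to a
  word ending in d, from which the Hamiltonian path of the next block is started.\<close>

definition dec_parikh :: "nat list \<Rightarrow> nat \<Rightarrow> nat list" where
  "dec_parikh P c = P[c := P ! c - 1]"

lemma ham_path_from_iff_successively:
  "ham_path_from \<sigma> P w ps \<longleftrightarrow> ps \<noteq> [] \<and> hd ps = w \<and> distinct ps \<and>
     set ps = words_of \<sigma> P \<and> successively (conf_edge \<sigma> P) ps"
  unfolding ham_path_from_def successively_conv_nth by blast

lemma words_of_mset_cong:
  assumes "mset u = mset w"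
  shows "u \<in> words_of \<sigma> P \<longleftrightarrow> w \<in> words_of \<sigma> P"
proof -
  have "length u = length w" "set u = set w" "\<And>a. count_list u a = count_list w a"
    using assms by (metis size_mset, metis set_mset_mset, metis count_mset)
  then show ?thesis unfolding words_of_def by simp
qed

lemma is_2swap_words_of:
  assumes "is_2swap w u" "w \<in> words_of \<sigma> P"
  shows "u \<in> words_of \<sigma> P"
proof -
  obtain i j where "i < length w" "j < length w" "u = swap2 w i j"
    using assms(1) unfolding is_2swap_def by blast
  then have "mset u = mset w" using mset_swap[of j w i] unfolding swap2_def by simp
  then show ?thesis using words_of_mset_cong assms(2) by blast
qed

lemma last_letter_in_words_of:
  assumes "v \<in> words_of \<sigma> P" "v \<noteq> []"
  shows "last v < \<sigma>" "P ! last v > 0"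
proof -
  have "last v \<in> set v" using assms(2) by simp
  then show "last v < \<sigma>" using assms(1) unfolding words_of_def by auto
  moreover have "count_list v (last v) > 0"
    using \<open>last v \<in> set v\<close> by (metis count_list_0_iff not_gr0)
  ultimately show "P ! last v > 0" using assms(1) unfolding words_of_def by auto
qed

lemma words_of_empty_parikh:
  assumes "length P = \<sigma>" "sum_list P = 0"
  shows "words_of \<sigma> P = {[]}"
proof -
  have "\<forall>a<\<sigma>. P ! a = 0" using assms by (metis elem_le_sum_list le_zero_eq)
  then show ?thesis unfolding words_of_def assms(2) by auto
qed

lemma sum_list_dec_parikh:
  assumes "c < length P" "P ! c > 0"
  shows "sum_list (dec_parikh P c) = sum_list P - 1"
  using assms sum_list_update[of c P "P ! c - 1"] elem_le_sum_list[of c P]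
  unfolding dec_parikh_def by simp

lemma snoc_in_words_of_iff:
  assumes "length P = \<sigma>" "c < \<sigma>" "P ! c > 0"
  shows "u @ [c] \<in> words_of \<sigma> P \<longleftrightarrow> u \<in> words_of \<sigma> (dec_parikh P c)"
proof -
  have "length (u @ [c]) = sum_list P \<longleftrightarrow> length u = sum_list (dec_parikh P c)"
    using assms sum_list_dec_parikh[of c P] elem_le_sum_list[of c P] by auto
  moreover have "(\<forall>a<\<sigma>. count_list (u @ [c]) a = P ! a) \<longleftrightarrow>
                 (\<forall>a<\<sigma>. count_list u a = dec_parikh P c ! a)"
    using assms unfolding dec_parikh_def by (auto simp: nth_list_update)
  ultimately show ?thesis using assms unfolding words_of_def by auto
qed

lemma is_2swap_snoc:
  assumes "is_2swap u v"
  shows "is_2swap (u @ [c]) (v @ [c])"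
proof -
  obtain i j where ij: "i < length u" "j < length u" "i \<noteq> j" "u ! i \<noteq> u ! j" "v = swap2 u i j"
    using assms unfolding is_2swap_def by blast
  have "v @ [c] = swap2 (u @ [c]) i j"
    using ij(1,2,5) unfolding swap2_def by (simp add: list_update_append nth_append)
  moreover have "i < length (u @ [c])" "j < length (u @ [c])" "(u @ [c]) ! i \<noteq> (u @ [c]) ! j"
    using ij(1,2,4) by (simp_all add: nth_append)
  ultimately show ?thesis unfolding is_2swap_def using ij(3) by blast
qed

lemma is_2swap_exchange_last:
  assumes "i < length x" "x ! i = d" "d \<noteq> c"
  shows "is_2swap (x @ [c]) (x[i := c] @ [d])"
proof -
  have "x[i := c] @ [d] = swap2 (x @ [c]) i (length x)"
    unfolding swap2_def using assms by (simp add: list_update_append nth_append)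
  moreover have "i < length (x @ [c])" "length x < length (x @ [c])" "i \<noteq> length x"
    "(x @ [c]) ! i \<noteq> (x @ [c]) ! length x"
    using assms by (simp_all add: nth_append)
  ultimately show ?thesis unfolding is_2swap_def by blast
qed

lemma conf_edge_to_next_block:
  assumes "length P = \<sigma>" "c < \<sigma>" "P ! c > 0" "d < \<sigma>" "P ! d > 0" "d \<noteq> c"
    and "x \<in> words_of \<sigma> (dec_parikh P c)"
  obtains w' where "conf_edge \<sigma> P (x @ [c]) w'" "w' \<noteq> []" "last w' = d"
proof -
  have "count_list x d = dec_parikh P c ! d"
    using assms(4,7) unfolding words_of_def by blast
  also have "\<dots> = P ! d" using assms(6) unfolding dec_parikh_def by simp
  finally have "count_list x d = P ! d" .
  then have "d \<in> set x" using assms(5) by (metis count_list_0_iff not_gr0)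
  then obtain i where i: "i < length x" "x ! i = d" by (metis in_set_conv_nth)
  have swap: "is_2swap (x @ [c]) (x[i := c] @ [d])"
    using is_2swap_exchange_last[OF i assms(6)] .
  have "x @ [c] \<in> words_of \<sigma> P" using assms(7) snoc_in_words_of_iff[OF assms(1-3)] by blast
  then have "conf_edge \<sigma> P (x @ [c]) (x[i := c] @ [d])"
    unfolding conf_edge_def using swap is_2swap_words_of by blast
  then show thesis using that by simp
qed

lemma ham_path_snoc_block:
  assumes "length P = \<sigma>" "c < \<sigma>" "P ! c > 0" "ham_path_from \<sigma> (dec_parikh P c) u ps"
  shows "hd (map (\<lambda>v. v @ [c]) ps) = u @ [c]"
    and "distinct (map (\<lambda>v. v @ [c]) ps)"
    and "set (map (\<lambda>v. v @ [c]) ps) = {v \<in> words_of \<sigma> P. v \<noteq> [] \<and> last v = c}"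
    and "successively (conf_edge \<sigma> P) (map (\<lambda>v. v @ [c]) ps)"
    and "last ps \<in> words_of \<sigma> (dec_parikh P c)"
proof -
  note snoc_iff = snoc_in_words_of_iff[OF assms(1-3)]
  have ps: "ps \<noteq> []" "hd ps = u" "distinct ps" "set ps = words_of \<sigma> (dec_parikh P c)"
    "successively (conf_edge \<sigma> (dec_parikh P c)) ps"
    using assms(4) unfolding ham_path_from_iff_successively by auto
  show "hd (map (\<lambda>v. v @ [c]) ps) = u @ [c]" using ps by (simp add: hd_map)
  show "distinct (map (\<lambda>v. v @ [c]) ps)" using ps(3) by (simp add: distinct_map inj_on_def)
  show "last ps \<in> words_of \<sigma> (dec_parikh P c)" using ps(1,4) by auto
  have "(\<lambda>v. v @ [c]) ` words_of \<sigma> (dec_parikh P c) = {v \<in> words_of \<sigma> P. v \<noteq> [] \<and> last v = c}"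
  proof (intro equalityI subsetI)
    fix v assume "v \<in> (\<lambda>v. v @ [c]) ` words_of \<sigma> (dec_parikh P c)"
    then obtain u where "u \<in> words_of \<sigma> (dec_parikh P c)" "v = u @ [c]" by blast
    then show "v \<in> {v \<in> words_of \<sigma> P. v \<noteq> [] \<and> last v = c}" using snoc_iff by simp
  next
    fix v assume "v \<in> {v \<in> words_of \<sigma> P. v \<noteq> [] \<and> last v = c}"
    then have v: "v \<in> words_of \<sigma> P" "v = butlast v @ [c]"
      by (auto simp: append_butlast_last_id)
    then have "butlast v \<in> words_of \<sigma> (dec_parikh P c)" using snoc_iff by metis
    with v(2) show "v \<in> (\<lambda>v. v @ [c]) ` words_of \<sigma> (dec_parikh P c)" by blast
  qed
  then show "set (map (\<lambda>v. v @ [c]) ps) = {v \<in> words_of \<sigma> P. v \<noteq> [] \<and> last v = c}"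
    using ps(4) by simp
  show "successively (conf_edge \<sigma> P) (map (\<lambda>v. v @ [c]) ps)"
    unfolding successively_map using ps(5)
  proof (rule successively_mono)
    fix x y assume "conf_edge \<sigma> (dec_parikh P c) x y"
    then show "conf_edge \<sigma> P (x @ [c]) (y @ [c])"
      unfolding conf_edge_def using snoc_iff is_2swap_snoc by blast
  qed
qed

lemma path_through_blocks:
  assumes "length P = \<sigma>" "distinct cs" "cs \<noteq> []" "\<forall>c\<in>set cs. c < \<sigma> \<and> P ! c > 0"
    and blocks: "\<And>c u. c \<in> set cs \<Longrightarrow> u \<in> words_of \<sigma> (dec_parikh P c) \<Longrightarrow>
                   \<exists>ps. ham_path_from \<sigma> (dec_parikh P c) u ps"
    and "w \<in> words_of \<sigma> P" "w \<noteq> []" "last w = hd cs"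
  shows "\<exists>ps. ps \<noteq> [] \<and> hd ps = w \<and> distinct ps \<and>
            set ps = {v \<in> words_of \<sigma> P. v \<noteq> [] \<and> last v \<in> set cs} \<and>
            successively (conf_edge \<sigma> P) ps"
  using assms(2-8)
proof (induction cs arbitrary: w)
  case Nil
  then show ?case by simp
next
  case (Cons c rest)
  have c: "c < \<sigma>" "P ! c > 0" using Cons.prems by auto
  have w: "w = butlast w @ [c]"
    using Cons.prems by (metis append_butlast_last_id list.sel(1))
  then have "butlast w \<in> words_of \<sigma> (dec_parikh P c)"
    using Cons.prems(5) snoc_in_words_of_iff[OF assms(1) c] by metis
  then obtain ps where ps: "ham_path_from \<sigma> (dec_parikh P c) (butlast w) ps"
    using Cons.prems(4) by auto
  define qs where "qs = map (\<lambda>v. v @ [c]) ps"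
  note block = ham_path_snoc_block[OF assms(1) c ps, folded qs_def]
  have qs_nonempty: "qs \<noteq> []" using ps unfolding qs_def ham_path_from_def by simp
  show ?case
  proof (cases rest)
    case Nil
    then show ?thesis using block w qs_nonempty by (intro exI[of _ qs]) auto
  next
    case (Cons d rest')
    have d: "d < \<sigma>" "P ! d > 0" "d \<noteq> c" using Cons.prems \<open>rest = d # rest'\<close> by auto
    obtain w' where w': "conf_edge \<sigma> P (last ps @ [c]) w'" "w' \<noteq> []" "last w' = d"
      using conf_edge_to_next_block[OF assms(1) c d block(5)] .
    have "w' \<in> words_of \<sigma> P" using w'(1) unfolding conf_edge_def by blast
    then obtain rs where rs: "rs \<noteq> []" "hd rs = w'" "distinct rs"
      "set rs = {v \<in> words_of \<sigma> P. v \<noteq> [] \<and> last v \<in> set rest}"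
      "successively (conf_edge \<sigma> P) rs"
      using Cons.IH[of w'] Cons.prems \<open>rest = d # rest'\<close> w' by auto
    have "last qs = last ps @ [c]" using ps unfolding qs_def ham_path_from_def by (simp add: last_map)
    moreover have "set qs \<inter> set rs = {}" using block(3) rs(4) Cons.prems(1) by auto
    ultimately show ?thesis
      using block w qs_nonempty rs w'(1) by (intro exI[of _ "qs @ rs"]) (auto simp: successively_append_iff)
  qed
qed

lemma ham_path_from_exists:
  assumes "length P = \<sigma>" "w \<in> words_of \<sigma> P"
  shows "\<exists>ps. ham_path_from \<sigma> P w ps"
  using assms
proof (induction "sum_list P" arbitrary: P w)
  case 0
  then have "words_of \<sigma> P = {[]}" using words_of_empty_parikh by metis
  then have "ham_path_from \<sigma> P w [[]]" using "0.prems"(2) unfolding ham_path_from_def by simp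
  then show ?case by blast
next
  case (Suc n)
  have "length w = Suc n" using Suc.hyps(2) Suc.prems(2) unfolding words_of_def by simp
  then have "w \<noteq> []" by auto
  define cs where "cs = last w # filter (\<lambda>d. d \<noteq> last w \<and> P ! d > 0) [0..<\<sigma>]"
  have letters: "\<forall>c\<in>set cs. c < \<sigma> \<and> P ! c > 0"
    using last_letter_in_words_of[OF Suc.prems(2) \<open>w \<noteq> []\<close>] unfolding cs_def by auto
  have blocks: "\<exists>ps. ham_path_from \<sigma> (dec_parikh P c) u ps"
    if "c \<in> set cs" "u \<in> words_of \<sigma> (dec_parikh P c)" for c u
  proof -
    have "n = sum_list (dec_parikh P c)"
      using sum_list_dec_parikh[of c P] letters that(1) Suc.hyps(2) Suc.prems(1) by simp
    moreover have "length (dec_parikh P c) = \<sigma>" using Suc.prems(1) by (simp add: dec_parikh_def)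
    ultimately show ?thesis using Suc.hyps(1) that(2) by blast
  qed
  have "distinct cs" "cs \<noteq> []" "last w = hd cs" unfolding cs_def by simp_all
  then obtain ps where ps: "ps \<noteq> []" "hd ps = w" "distinct ps"
    "set ps = {v \<in> words_of \<sigma> P. v \<noteq> [] \<and> last v \<in> set cs}"
    "successively (conf_edge \<sigma> P) ps"
    using path_through_blocks[OF Suc.prems(1) _ _ letters blocks Suc.prems(2) \<open>w \<noteq> []\<close>] by blast
  have "v \<noteq> [] \<and> last v \<in> set cs" if "v \<in> words_of \<sigma> P" for v
  proof -
    have "length v = Suc n" using that Suc.hyps(2) unfolding words_of_def by simp
    then have "v \<noteq> []" by auto
    then show ?thesis using last_letter_in_words_of[OF that] unfolding cs_def by auto
  qed
  then have "set ps = words_of \<sigma> P" using ps(4) by auto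
  then show ?case using ps unfolding ham_path_from_iff_successively by blast
qed

theorem theorem4:
  fixes \<sigma> :: nat and P :: "nat list" and w :: "nat list"
  assumes "\<sigma> \<ge> 2" and "length P = \<sigma>" and "w \<in> words_of \<sigma> P"
  shows "\<exists>ps. ham_path_from \<sigma> P w ps"
  using ham_path_from_exists assms(2,3) .

end
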